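(* For every integer $r\ge2$, the sequence $\mathcal{F}^{(r)}$ is strongly polynomially computable.
   Context: For an integer $r\ge2$, let $\mathcal{A}^{(r)}$ be the set of pairs of integers $(n,k)$ with $n\ge rk$, and $\mathcal{F}^{(r)}=(\mathcal{F}^{(r)}_{(n,k)})_{(n,k)\in\mathcal{A}^{(r)}}$ with $\mathcal{F}^{(r)}_{(n,k)}=\binom{[n]}{k}$ (ground set $[n]$, so $n_{(n,k)}=n$). Subsets of $[n]$ are identified with characteristic vectors in $\{0,1\}^n$. For a family $\mathcal{G}$ of non-empty subsets of $[N]$ and an integer $p\ge2$, $\mathrm{cd}_p(\mathcal{G})$ is the minimum size of $Y\subseteq[N]$ such that $[N]\setminus Y$ can be colored with $p$ colors with no set $e\in\mathcal{G}$, $e\cap Y=\emptyset$, monochromatic. A sequence $\mathcal{F}=(\mathcal{F}_\alpha)_{\alpha\in\mathcal{A}}$ of families of non-empty subsets of $[n_\alpha]$ is strongly polynomially computable if one can associate with each $\mathcal{F}_\alpha$ a linear order $\le$ on its members such that, for some polynomials $q_1,q_2,q_3$: (1) an algorithm, given $\alpha$, runs in time $q_1(n_\alpha)$ and outputs a Boolean circuit $C_1:\{0,1\}^{2n_\alpha}\to\{0,1\}$ with $C_1(B_1,B_2)=1$ iff $B_1\le B_2$, for all $B_1,B_2\in\mathcal{F}_\alpha$; (2) an algorithm, given $\alpha$, runs in time $q_2(n_\alpha)$ and outputs a Boolean circuit $C_2:\{0,1\}^{n_\alpha}\to\{0,1\}^{n_\alpha}$ such that for every $D\subseteq[n_\alpha]$,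 $C_2(D)$ is the $\le$-minimal subset of $D$ belonging to $\mathcal{F}_\alpha$ if such exists, and the empty set otherwise; (3) for every prime $p$, an algorithm, given $\alpha$, runs in time $q_3(n_\alpha)$ and returns $\mathrm{cd}_p(\mathcal{F}_\alpha)$. *)

theory Defs
  imports "HOL-Computational_Algebra.Primes"
begin

datatype instr =
    RConst nat nat
  | RAdd nat nat nat
  | RSub nat nat nat
  | RLoad nat nat
  | RStore nat nat
  | RJz nat nat

type_synonym ram_state = "nat \<times> (nat \<Rightarrow> nat)"

fun exec_instr :: "instr \<Rightarrow> nat \<Rightarrow> (nat \<Rightarrow> nat) \<Rightarrow> ram_state" where
  "exec_instr (RConst r c) pc M = (Suc pc, M(r := c))"
| "exec_instr (RAdd r a b) pc M = (Suc pc, M(r := M a + M b))"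
| "exec_instr (RSub r a b) pc M = (Suc pc, M(r := M a - M b))"
| "exec_instr (RLoad r a) pc M = (Suc pc, M(r := M (M a)))"
| "exec_instr (RStore a r) pc M = (Suc pc, M(M a := M r))"
| "exec_instr (RJz r l) pc M = (if M r = 0 then (l, M) else (Suc pc, M))"

text \<open>The machine halts when the program counter leaves the program.\<close>
definition ram_step :: "instr list \<Rightarrow> ram_state \<Rightarrow> ram_state" where
  "ram_step P s = (if fst s < length P then exec_instr (P ! fst s) (fst s) (snd s) else s)"

definition ram_init :: "nat list \<Rightarrow> ram_state" where
  "ram_init xs = (0, \<lambda>i. if i < length xs then xs ! i else 0)"

text \<open>Output convention: at halting, cell 0 holds the output length L and
  cells 1..L hold the output.\<close>
definition ram_output :: "(nat \<Rightarrow> nat) \<Rightarrow> nat list" where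
  "ram_output M = map M [1..<Suc (M 0)]"

definition ram_computes_within :: "instr list \<Rightarrow> nat list \<Rightarrow> nat list \<Rightarrow> nat \<Rightarrow> bool" where
  "ram_computes_within P xs ys t \<longleftrightarrow>
     (\<exists>t' \<le> t. let s = (ram_step P ^^ t') (ram_init xs) in
                 length P \<le> fst s \<and> ram_output (snd s) = ys)"

datatype gate = GIn nat | GConst bool | GNot nat | GAnd nat nat | GOr nat nat

type_synonym circuit = "gate list \<times> nat list"  (* gates, output gate indices *)

definition getv :: "bool list \<Rightarrow> nat \<Rightarrow> bool" where
  "getv vs j \<longleftrightarrow> j < length vs \<and> vs ! j"

fun gate_val :: "bool list \<Rightarrow> bool list \<Rightarrow> gate \<Rightarrow> bool" where
  "gate_val xs vs (GIn i) = getv xs i"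
| "gate_val xs vs (GConst b) = b"
| "gate_val xs vs (GNot j) = (\<not> getv vs j)"
| "gate_val xs vs (GAnd j k) = (getv vs j \<and> getv vs k)"
| "gate_val xs vs (GOr j k) = (getv vs j \<or> getv vs k)"

text \<open>Gates are evaluated in order; a gate may only refer to earlier gates.\<close>
fun eval_gates :: "bool list \<Rightarrow> bool list \<Rightarrow> gate list \<Rightarrow> bool list" where
  "eval_gates xs vs [] = vs"
| "eval_gates xs vs (g # gs) = eval_gates xs (vs @ [gate_val xs vs g]) gs"

definition eval_circuit :: "circuit \<Rightarrow> bool list \<Rightarrow> bool list" where
  "eval_circuit C xs = map (getv (eval_gates xs [] (fst C))) (snd C)"

fun enc_gate :: "gate \<Rightarrow> nat list" where
  "enc_gate (GIn i) = [0, i]"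
| "enc_gate (GConst b) = [1, if b then 1 else 0]"
| "enc_gate (GNot j) = [2, j]"
| "enc_gate (GAnd j k) = [3, j, k]"
| "enc_gate (GOr j k) = [4, j, k]"

definition enc_circuit :: "circuit \<Rightarrow> nat list" where
  "enc_circuit C = [length (fst C)] @ concat (map enc_gate (fst C)) @ [length (snd C)] @ snd C"

text \<open>Subset B of [N] = {1..N} as characteristic vector (bit i-1 stands for element i).\<close>
definition charvec :: "nat \<Rightarrow> nat set \<Rightarrow> bool list" where
  "charvec N B = map (\<lambda>i. Suc i \<in> B) [0..<N]"

definition cd :: "nat \<Rightarrow> nat \<Rightarrow> nat set set \<Rightarrow> nat" where
  "cd p N G = (LEAST m. \<exists>Y. Y \<subseteq> {1..N} \<and> card Y = m \<and>
      (\<exists>c :: nat \<Rightarrow> nat. (\<forall>x \<in> {1..N} - Y. c x < p) \<and>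
         (\<forall>e \<in> G. e \<inter> Y = {} \<longrightarrow> \<not> (\<exists>col. \<forall>x \<in> e. c x = col))))"

definition is_min_sub :: "(nat set \<times> nat set) set \<Rightarrow> nat set set \<Rightarrow> nat set \<Rightarrow> nat set \<Rightarrow> bool" where
  "is_min_sub R F D B \<longleftrightarrow> B \<in> F \<and> B \<subseteq> D \<and> (\<forall>B' \<in> F. B' \<subseteq> D \<longrightarrow> (B, B') \<in> R)"

text \<open>A sequence indexed by A, with ground-set sizes nsz, input encodings enc
  (how the index alpha is handed to an algorithm), and families Fam.
  Polynomial time bounds q(n) are written as c * (n+1)^d (every polynomial is
  dominated by such a bound and conversely).\<close>
definition strongly_poly_computable ::
  "'a set \<Rightarrow> ('a \<Rightarrow> nat) \<Rightarrow> ('a \<Rightarrow> nat list) \<Rightarrow> ('a \<Rightarrow> nat set set) \<Rightarrow> bool" where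
  "strongly_poly_computable A nsz enc Fam \<longleftrightarrow>
    (\<exists>R :: 'a \<Rightarrow> (nat set \<times> nat set) set.
       (\<forall>\<alpha> \<in> A. linear_order_on (Fam \<alpha>) (R \<alpha>)) \<and>
       (\<exists>c1 d1 :: nat. \<exists>P1. \<forall>\<alpha> \<in> A. \<exists>C :: circuit.
          ram_computes_within P1 (enc \<alpha>) (enc_circuit C) (c1 * (nsz \<alpha> + 1) ^ d1) \<and>
          (\<forall>B1 \<in> Fam \<alpha>. \<forall>B2 \<in> Fam \<alpha>.
             eval_circuit C (charvec (nsz \<alpha>) B1 @ charvec (nsz \<alpha>) B2) = [(B1, B2) \<in> R \<alpha>])) \<and>
       (\<exists>c2 d2 :: nat. \<exists>P2. \<forall>\<alpha> \<in> A. \<exists>C :: circuit.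
          ram_computes_within P2 (enc \<alpha>) (enc_circuit C) (c2 * (nsz \<alpha> + 1) ^ d2) \<and>
          (\<forall>D. D \<subseteq> {1..nsz \<alpha>} \<longrightarrow>
             (if \<exists>B \<in> Fam \<alpha>. B \<subseteq> D
              then (\<exists>B. is_min_sub (R \<alpha>) (Fam \<alpha>) D B \<and>
                        eval_circuit C (charvec (nsz \<alpha>) D) = charvec (nsz \<alpha>) B)
              else eval_circuit C (charvec (nsz \<alpha>) D) = charvec (nsz \<alpha>) {}))) \<and>
       (\<exists>c3 d3 :: nat. \<forall>p :: nat. prime p \<longrightarrow> (\<exists>P3. \<forall>\<alpha> \<in> A.
          ram_computes_within P3 (enc \<alpha>) [cd p (nsz \<alpha>) (Fam \<alpha>)] (c3 * (nsz \<alpha> + 1) ^ d3))))"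

definition idxA :: "nat \<Rightarrow> (nat \<times> nat) set" where
  "idxA r = {(n, k). 1 \<le> k \<and> r * k \<le> n}"

definition famF :: "nat \<times> nat \<Rightarrow> nat set set" where
  "famF \<alpha> = {B. B \<subseteq> {1..fst \<alpha>} \<and> card B = snd \<alpha>}"

definition encF :: "nat \<times> nat \<Rightarrow> nat list" where
  "encF \<alpha> = [fst \<alpha>, snd \<alpha>]"

end

theory Submission
  imports Defs
begin

text \<open>Order the \<open>k\<close>-subsets of \<open>[n]\<close> lexicographically.  Two of them are compared by a ripple
  circuit scanning the positions from \<open>n\<close> down to \<open>1\<close>.  The least \<open>k\<close>-subset of \<open>D\<close> consists of
  the first \<open>k\<close> elements of \<open>D\<close>; a threshold-counting circuit with \<open>O(n k)\<close> gates selects them,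
  and outputs nothing when \<open>|D| < k\<close>.  Finally \<open>cd\<^sub>p = n - p (k - 1)\<close>: every colour class of the
  undeleted points has fewer than \<open>k\<close> elements, and colouring the last \<open>p (k - 1)\<close> points in blocks
  of \<open>k - 1\<close> attains the bound.  Each circuit is written out by a loop of a RAM program, verified
  in a Hoare-style logic over an abstraction of the memory into registers and an output buffer; the
  running times are \<open>O(n)\<close>, \<open>O(n\<^sup>2)\<close> and \<open>O(n)\<close>.\<close>

section \<open>Lexicographic order on \<open>k\<close>-subsets\<close>

fun lex_le :: "nat set \<Rightarrow> nat set \<Rightarrow> nat \<Rightarrow> nat \<Rightarrow> bool" where
  "lex_le A B i 0 = True"
| "lex_le A B i (Suc m) = (if (i \<in> A) = (i \<in> B) then lex_le A B (Suc i) m else i \<in> A)"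

lemma lex_le_refl: "lex_le A A i m"
  by (induction m arbitrary: i) auto

lemma lex_le_trans: "lex_le A B i m \<Longrightarrow> lex_le B C i m \<Longrightarrow> lex_le A C i m"
  by (induction m arbitrary: i) (auto split: if_splits)

lemma lex_le_total: "lex_le A B i m \<or> lex_le B A i m"
  by (induction m arbitrary: i) auto

lemma lex_le_antisym:
  assumes "lex_le A B i m" "lex_le B A i m" "i \<le> x" "x < i + m"
  shows "x \<in> A \<longleftrightarrow> x \<in> B"
  using assms
proof (induction m arbitrary: i)
  case (Suc m)
  then show ?case
    by (cases "x = i") (auto split: if_splits)
qed simp

definition lex_order :: "nat \<times> nat \<Rightarrow> (nat set \<times> nat set) set" where
  "lex_order \<alpha> = {(B1, B2). B1 \<in> famF \<alpha> \<and> B2 \<in> famF \<alpha> \<and> lex_le B1 B2 1 (fst \<alpha>)}"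

lemma linear_order_lex_order: "linear_order_on (famF \<alpha>) (lex_order \<alpha>)"
proof -
  have antisym: "B1 = B2" if "B1 \<in> famF \<alpha>" "B2 \<in> famF \<alpha>"
      "lex_le B1 B2 1 (fst \<alpha>)" "lex_le B2 B1 1 (fst \<alpha>)" for B1 B2
    using that lex_le_antisym[OF that(3,4)] by (auto simp: famF_def)
  show ?thesis
    unfolding linear_order_on_def partial_order_on_def preorder_on_def refl_on_def
      total_on_def antisym_def trans_def
    using antisym lex_le_refl lex_le_total by (auto simp: lex_order_def intro: lex_le_trans)
qed

section \<open>The colouring number of complete uniform families\<close>

lemma card_le_cd_witness:
  assumes Y: "Y \<subseteq> {1..n}" and colouring: "\<forall>x\<in>{1..n} - Y. c x < p"
    and no_mono: "\<forall>e\<in>famF (n, k). e \<inter> Y = {} \<longrightarrow> \<not> (\<exists>col. \<forall>x\<in>e. c x = col)"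
  shows "n - p * (k - 1) \<le> card Y"
proof -
  define S where "S = {1..n} - Y"
  have colour_class: "card {x\<in>S. c x = q} \<le> k - 1" for q
  proof (rule ccontr)
    assume "\<not> card {x\<in>S. c x = q} \<le> k - 1"
    then have "k \<le> card {x\<in>S. c x = q}" by simp
    then obtain e where e: "e \<subseteq> {x\<in>S. c x = q}" "card e = k"
      using obtain_subset_with_card_n by metis
    then have "e \<in> famF (n, k)" "e \<inter> Y = {}" "\<forall>x\<in>e. c x = q"
      by (auto simp: famF_def S_def)
    then show False using no_mono by blast
  qed
  have "S = (\<Union>q<p. {x\<in>S. c x = q})"
    using colouring by (auto simp: S_def)
  then have "card S = card (\<Union>q<p. {x\<in>S. c x = q})"
    by (rule arg_cong)
  also have "\<dots> \<le> (\<Sum>q<p. card {x\<in>S. c x = q})"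
    by (rule card_UN_le) simp
  also have "\<dots> \<le> p * (k - 1)"
    using sum_mono[of "{..<p}" "\<lambda>q. card {x\<in>S. c x = q}" "\<lambda>_. k - 1"] colour_class by simp
  finally show ?thesis
    using Y by (simp add: S_def card_Diff_subset finite_subset)
qed

text \<open>Colour the elements after the deleted prefix in consecutive blocks of \<open>k - 1\<close>.\<close>

lemma block_colouring:
  fixes n p k :: nat
  assumes "1 \<le> k"
  defines "m \<equiv> n - p * (k - 1)"
  shows "\<exists>c :: nat \<Rightarrow> nat. (\<forall>x \<in> {1..n} - {1..m}. c x < p) \<and>
           (\<forall>e \<in> famF (n, k). e \<inter> {1..m} = {} \<longrightarrow> \<not> (\<exists>col. \<forall>x \<in> e. c x = col))"
proof (cases "k = 1")
  case True
  have "e \<notin> famF (n, k)" if "e \<inter> {1..m} = {}" for e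
  proof
    assume "e \<in> famF (n, k)"
    then have "e \<subseteq> {1..m}" "card e = 1" using True by (auto simp: famF_def m_def)
    with that show False by (simp add: Int_absorb2)
  qed
  then show ?thesis
    using True by (intro exI[of _ "\<lambda>_. 0"]) (auto simp: m_def)
next
  case False
  define c where "c x = (x - Suc m) div (k - 1)" for x
  have block: "x \<in> {Suc m + c x * (k - 1) ..< Suc m + c x * (k - 1) + (k - 1)}" if "m < x" for x
  proof -
    have "(x - Suc m) div (k - 1) * (k - 1) \<le> x - Suc m"
      by (rule div_times_less_eq_dividend)
    moreover have "x - Suc m < (x - Suc m) div (k - 1) * (k - 1) + (k - 1)"
      using div_mult_mod_eq[of "x - Suc m" "k - 1"] mod_less_divisor[of "k - 1" "x - Suc m"]
        False assms(1) by linarith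
    ultimately show ?thesis
      using that unfolding c_def atLeastLessThan_iff by (intro conjI; linarith)
  qed
  show ?thesis
  proof (intro exI[of _ c] conjI ballI impI notI)
    fix x assume "x \<in> {1..n} - {1..m}"
    then have "x - Suc m < p * (k - 1)" by (auto simp: m_def)
    then show "c x < p" using False by (simp add: c_def div_less_iff_less_mult mult.commute)
  next
    fix e assume e: "e \<in> famF (n, k)" "e \<inter> {1..m} = {}" and "\<exists>col. \<forall>x\<in>e. c x = col"
    then obtain col where col: "\<forall>x\<in>e. c x = col" by blast
    have "e \<subseteq> {Suc m + col * (k - 1) ..< Suc m + col * (k - 1) + (k - 1)}"
    proof
      fix x assume "x \<in> e"
      then have "x \<in> {1..n}" "x \<notin> {1..m}" using e by (auto simp: famF_def)
      then have "m < x" by simp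
      with block[of x] col \<open>x \<in> e\<close> show "x \<in> {Suc m + col * (k - 1) ..< Suc m + col * (k - 1) + (k - 1)}"
        by simp
    qed
    then have "card e \<le> card {Suc m + col * (k - 1) ..< Suc m + col * (k - 1) + (k - 1)}"
      by (rule card_mono[OF finite_atLeastLessThan])
    then show False using e assms(1) by (simp add: famF_def)
  qed
qed

lemma cd_famF:
  assumes "1 \<le> k"
  shows "cd p n (famF (n, k)) = n - p * (k - 1)"
  unfolding cd_def
proof (rule Least_equality)
  show "\<exists>Y\<subseteq>{1..n}. card Y = n - p * (k - 1) \<and> (\<exists>c. (\<forall>x\<in>{1..n} - Y. c x < p) \<and>
          (\<forall>e\<in>famF (n, k). e \<inter> Y = {} \<longrightarrow> \<not> (\<exists>col. \<forall>x\<in>e. c x = col)))"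
  proof (intro exI[of _ "{1..n - p * (k - 1)}"] conjI)
    show "{1..n - p * (k - 1)} \<subseteq> {1..n}" by auto
    show "card {1..n - p * (k - 1)} = n - p * (k - 1)" by simp
  qed (rule block_colouring[OF assms])
next
  fix y assume "\<exists>Y\<subseteq>{1..n}. card Y = y \<and> (\<exists>c. (\<forall>x\<in>{1..n} - Y. c x < p) \<and>
          (\<forall>e\<in>famF (n, k). e \<inter> Y = {} \<longrightarrow> \<not> (\<exists>col. \<forall>x\<in>e. c x = col)))"
  then obtain Y c where "Y \<subseteq> {1..n}" "card Y = y" "\<forall>x\<in>{1..n} - Y. c x < p"
      "\<forall>e\<in>famF (n, k). e \<inter> Y = {} \<longrightarrow> \<not> (\<exists>col. \<forall>x\<in>e. c x = col)"
    by blast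
  then show "n - p * (k - 1) \<le> y" using card_le_cd_witness[of Y n c p k] by simp
qed

section \<open>Lexicographically least \<open>k\<close>-subsets\<close>

definition count_upto :: "nat set \<Rightarrow> nat \<Rightarrow> nat" where
  "count_upto D m = card (D \<inter> {1..m})"

lemma count_upto_0 [simp]: "count_upto D 0 = 0"
  by (simp add: count_upto_def)

lemma count_upto_Suc: "count_upto D (Suc m) = count_upto D m + (if Suc m \<in> D then 1 else 0)"
proof -
  have "D \<inter> {1..Suc m} = (if Suc m \<in> D then insert (Suc m) (D \<inter> {1..m}) else D \<inter> {1..m})"
    by (auto simp: le_Suc_eq)
  then show ?thesis by (simp add: count_upto_def)
qed

lemma count_upto_eq_card: "D \<subseteq> {1..n} \<Longrightarrow> count_upto D n = card D"
  by (simp add: count_upto_def Int_absorb2)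

definition first_elems :: "nat set \<Rightarrow> nat \<Rightarrow> nat set" where
  "first_elems D k = {x \<in> D. count_upto D (x - 1) < k}"

lemma first_elems_subset: "first_elems D k \<subseteq> D"
  by (auto simp: first_elems_def)

lemma card_first_elems_upto:
  assumes "0 \<notin> D"
  shows "card (first_elems D k \<inter> {1..m}) = min k (count_upto D m)"
proof (induction m)
  case (Suc m)
  show ?case
  proof (cases "Suc m \<in> D \<and> count_upto D m < k")
    case True
    then have "first_elems D k \<inter> {1..Suc m} = insert (Suc m) (first_elems D k \<inter> {1..m})"
      by (auto simp: first_elems_def le_Suc_eq)
    then show ?thesis using Suc True by (simp add: count_upto_Suc)
  next
    case False
    then have "first_elems D k \<inter> {1..Suc m} = first_elems D k \<inter> {1..m}"
      by (auto simp: first_elems_def le_Suc_eq)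
    then show ?thesis using Suc False by (auto simp: count_upto_Suc)
  qed
qed simp

lemma card_first_elems:
  assumes "D \<subseteq> {1..n}" "k \<le> card D"
  shows "card (first_elems D k) = k"
proof -
  have "first_elems D k \<inter> {1..n} = first_elems D k"
    using assms(1) first_elems_subset by blast
  moreover have "0 \<notin> D" using assms(1) by auto
  ultimately show ?thesis
    using card_first_elems_upto[of D k n] count_upto_eq_card[OF assms(1)] assms(2) by simp
qed

text \<open>If the two sets agree below \<open>i\<close> and \<open>i\<close> lies in \<open>B\<close> but not in \<open>first_elems D k\<close>,
  then \<open>k\<close> elements of \<open>D\<close> precede \<open>i\<close>, and all of them lie in \<open>B\<close>: too many for \<open>card B = k\<close>.\<close>

lemma lex_le_first_elems:
  assumes D: "D \<subseteq> {1..n}" and B: "B \<subseteq> D" "card B = k"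
    and agree: "first_elems D k \<inter> {..<i} = B \<inter> {..<i}"
  shows "lex_le (first_elems D k) B i m"
  using agree
proof (induction m arbitrary: i)
  case (Suc m)
  let ?S = "first_elems D k"
  show ?case
  proof (cases "(i \<in> ?S) = (i \<in> B)")
    case True
    then have "?S \<inter> {..<Suc i} = B \<inter> {..<Suc i}"
      using Suc.prems by (auto simp: lessThan_Suc)
    then show ?thesis using True Suc.IH by simp
  next
    case differ: False
    show ?thesis
    proof (rule ccontr)
      assume "\<not> ?thesis"
      then have "i \<notin> ?S" "i \<in> B" using differ by auto
      then have "i \<in> D" "1 \<le> i" "\<not> count_upto D (i - 1) < k"
        using B D by (auto simp: first_elems_def)
      moreover have "0 \<notin> D" using D by auto
      ultimately have "card (?S \<inter> {1..i - 1}) = k"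
        using card_first_elems_upto[of D k "i - 1"] by simp
      moreover have "?S \<inter> {1..i - 1} = B \<inter> {..<i}"
        using Suc.prems \<open>1 \<le> i\<close> first_elems_subset[of D k] B(1) D by auto
      moreover have "finite B" using finite_subset[OF B(1) finite_subset[OF D]] by simp
      ultimately have "card (insert i (B \<inter> {..<i})) = Suc k" by simp
      then have "Suc k \<le> card B"
        using card_mono[OF \<open>finite B\<close>, of "insert i (B \<inter> {..<i})"] \<open>i \<in> B\<close> by simp
      then show False using B by simp
    qed
  qed
qed simp

lemma ex_famF_subset_iff:
  assumes "D \<subseteq> {1..n}"
  shows "(\<exists>B\<in>famF (n, k). B \<subseteq> D) \<longleftrightarrow> k \<le> card D"
proof
  assume "\<exists>B\<in>famF (n, k). B \<subseteq> D"
  then obtain B where "B \<subseteq> D" "card B = k" by (auto simp: famF_def)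
  then show "k \<le> card D"
    using assms by (metis card_mono finite_atLeastAtMost finite_subset)
next
  assume "k \<le> card D"
  then obtain B where "B \<subseteq> D" "card B = k" using obtain_subset_with_card_n by metis
  then show "\<exists>B\<in>famF (n, k). B \<subseteq> D" using assms by (auto simp: famF_def)
qed

lemma is_min_sub_first_elems:
  assumes D: "D \<subseteq> {1..n}" and "k \<le> card D"
  shows "is_min_sub (lex_order (n, k)) (famF (n, k)) D (first_elems D k)"
proof -
  let ?S = "first_elems D k"
  have S: "?S \<in> famF (n, k)"
    using card_first_elems[OF assms] first_elems_subset[of D k] D by (auto simp: famF_def)
  have "(?S, B) \<in> lex_order (n, k)" if "B \<in> famF (n, k)" "B \<subseteq> D" for B
  proof -
    have "?S \<inter> {..<1} = B \<inter> {..<1}"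
      using that(2) first_elems_subset[of D k] D by auto
    then have "lex_le ?S B 1 n"
      using lex_le_first_elems[OF D that(2)] that(1) by (simp add: famF_def)
    then show ?thesis using S that(1) by (simp add: lex_order_def)
  qed
  then show ?thesis using S first_elems_subset by (simp add: is_min_sub_def)
qed

definition gate_value :: "bool list \<Rightarrow> gate list \<Rightarrow> nat \<Rightarrow> bool" where
  "gate_value xs gs i = getv (eval_gates xs [] gs) i"

lemma eval_gates_prefix: "\<exists>ys. eval_gates xs vs gs = vs @ ys \<and> length ys = length gs"
proof (induction gs arbitrary: vs)
  case (Cons g gs)
  then obtain ys where "eval_gates xs (vs @ [gate_val xs vs g]) gs = (vs @ [gate_val xs vs g]) @ ys"
      "length ys = length gs"
    by blast
  then show ?case by (intro exI[of _ "gate_val xs vs g # ys"]) simp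
qed simp

lemma length_eval_gates: "length (eval_gates xs vs gs) = length vs + length gs"
  using eval_gates_prefix[of xs vs gs] by auto

lemma nth_eval_gates:
  "i < length gs \<Longrightarrow> eval_gates xs vs gs ! (length vs + i)
     = gate_val xs (take (length vs + i) (eval_gates xs vs gs)) (gs ! i)"
proof (induction gs arbitrary: vs i)
  case (Cons g gs)
  define vs' where "vs' = vs @ [gate_val xs vs g]"
  obtain ys where ys: "eval_gates xs vs' gs = vs' @ ys" using eval_gates_prefix by blast
  show ?case
  proof (cases i)
    case 0
    then show ?thesis using ys by (simp add: vs'_def nth_append)
  next
    case (Suc i')
    then have "i' < length gs" "length vs' + i' = length vs + i"
      using Cons.prems by (simp_all add: vs'_def)
    with Cons.IH[of i' vs'] show ?thesis using Suc by (simp add: vs'_def[symmetric])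
  qed
qed simp

lemma getv_take: "getv (take i vs) j \<longleftrightarrow> j < i \<and> getv vs j"
  by (auto simp: getv_def)

text \<open>References to later gates read as \<open>False\<close>; the circuits below only refer to earlier gates.\<close>

lemma gate_value_nth: "i < length gs \<Longrightarrow> gate_value xs gs i = (case gs ! i of
    GIn j \<Rightarrow> getv xs j | GConst b \<Rightarrow> b | GNot a \<Rightarrow> \<not> (a < i \<and> gate_value xs gs a)
  | GAnd a b \<Rightarrow> (a < i \<and> gate_value xs gs a) \<and> (b < i \<and> gate_value xs gs b)
  | GOr a b \<Rightarrow> (a < i \<and> gate_value xs gs a) \<or> (b < i \<and> gate_value xs gs b))"
  using nth_eval_gates[of i gs xs "[]"] length_eval_gates[of xs "[]" gs]
  by (cases "gs ! i") (auto simp: gate_value_def getv_def[of "eval_gates xs [] gs"] getv_take)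

lemma gate_value_GIn: "i < length gs \<Longrightarrow> gs ! i = GIn j \<Longrightarrow> gate_value xs gs i = getv xs j"
  by (simp add: gate_value_nth)

lemma gate_value_GConst: "i < length gs \<Longrightarrow> gs ! i = GConst b \<Longrightarrow> gate_value xs gs i = b"
  by (simp add: gate_value_nth)

lemma gate_value_GNot:
  "i < length gs \<Longrightarrow> gs ! i = GNot a \<Longrightarrow> a < i \<Longrightarrow> gate_value xs gs i = (\<not> gate_value xs gs a)"
  by (simp add: gate_value_nth)

lemma gate_value_GAnd: "i < length gs \<Longrightarrow> gs ! i = GAnd a b \<Longrightarrow> a < i \<Longrightarrow> b < i \<Longrightarrow>
    gate_value xs gs i = (gate_value xs gs a \<and> gate_value xs gs b)"
  by (simp add: gate_value_nth)

lemma gate_value_GOr: "i < length gs \<Longrightarrow> gs ! i = GOr a b \<Longrightarrow> a < i \<Longrightarrow> b < i \<Longrightarrow>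
    gate_value xs gs i = (gate_value xs gs a \<or> gate_value xs gs b)"
  by (simp add: gate_value_nth)

lemma eval_circuit_eq_map_gate_value: "eval_circuit C xs = map (gate_value xs (fst C)) (snd C)"
  by (simp add: eval_circuit_def gate_value_def fun_eq_iff)

lemma getv_charvec: "getv (charvec n B) j \<longleftrightarrow> j < n \<and> Suc j \<in> B"
  by (auto simp: getv_def charvec_def)

lemma getv_append: "getv (xs @ ys) j = (if j < length xs then getv xs j else getv ys (j - length xs))"
  by (auto simp: getv_def nth_append)

lemma length_charvec [simp]: "length (charvec n B) = n"
  by (simp add: charvec_def)

lemma length_concat_map_const:
  "(\<And>a. a < N \<Longrightarrow> length (f a) = L) \<Longrightarrow> length (concat (map f [0..<N])) = N * L"
  by (induction N) auto

lemma nth_concat_map_const: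
  assumes "\<And>a. a < N \<Longrightarrow> length (f a) = L" "a < N" "b < L"
  shows "concat (map f [0..<N]) ! (a * L + b) = f a ! b"
  using assms
proof (induction N)
  case (Suc N)
  show ?case
  proof (cases "a < N")
    case True
    have "a * L + b < Suc a * L" using Suc.prems(3) by simp
    also have "\<dots> \<le> N * L" using True by (intro mult_le_mono1) simp
    finally show ?thesis
      using Suc True length_concat_map_const[of N f L] by (simp add: nth_append)
  next
    case False
    then have "a = N" using Suc.prems(2) by simp
    then show ?thesis
      using Suc length_concat_map_const[of N f L] by (simp add: nth_append)
  qed
qed simp

lemma replicate_numeral: "replicate (numeral k) x = x # replicate (pred_numeral k) x"
  by (simp add: numeral_eq_Suc)

section \<open>Comparator and selector circuits\<close>

text \<open>Block \<open>s\<close> of the comparator reads position \<open>n - s\<close> of both sets (bits \<open>a\<close>, \<open>b\<close>)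
  and combines it with the verdict \<open>v\<close> for the positions after it (gate \<open>3 + 7 s\<close>) into
  \<open>(a \<and> \<not> b) \<or> ((a \<or> \<not> b) \<and> v)\<close>.\<close>

definition cmp_block :: "nat \<Rightarrow> nat \<Rightarrow> gate list" where
  "cmp_block n s = [GIn (n - 1 - s), GIn (n + (n - 1 - s)), GNot (4 + 7 * s + 1),
     GAnd (4 + 7 * s) (4 + 7 * s + 2), GOr (4 + 7 * s) (4 + 7 * s + 2),
     GAnd (4 + 7 * s + 4) (4 + 7 * s - 1), GOr (4 + 7 * s + 3) (4 + 7 * s + 5)]"

definition cmp_gates :: "nat \<Rightarrow> nat \<Rightarrow> gate list" where
  "cmp_gates n m = concat (map (cmp_block n) [0..<m])"

text \<open>The leading dummy gates \<open>GIn 0\<close> (three here, seven in the selector circuit) encode as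
  zeros: they are the zeroed scratch registers of the generating program, which precede its output
  buffer in memory and so form part of the output.\<close>

definition cmp_circuit :: "nat \<Rightarrow> circuit" where
  "cmp_circuit n = (replicate 3 (GIn 0) @ GConst True # cmp_gates n n, [3 + 7 * n])"

lemma length_cmp_block [simp]: "length (cmp_block n s) = 7"
  by (simp add: cmp_block_def)

lemma length_cmp_gates [simp]: "length (cmp_gates n m) = 7 * m"
  by (simp add: cmp_gates_def length_concat_map_const[of m _ 7])

lemma length_cmp_circuit: "length (fst (cmp_circuit n)) = 4 + 7 * n"
  by (simp add: cmp_circuit_def)

lemma cmp_circuit_block_gates:
  assumes s: "s < n"
  defines "G \<equiv> fst (cmp_circuit n)" and "b \<equiv> 4 + 7 * s"
  shows "b + 6 < length G"
    and "G ! b = GIn (n - 1 - s)" "G ! (b + 1) = GIn (n + (n - 1 - s))" "G ! (b + 2) = GNot (b + 1)"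
    and "G ! (b + 3) = GAnd b (b + 2)" "G ! (b + 4) = GOr b (b + 2)"
    and "G ! (b + 5) = GAnd (b + 4) (b - 1)" "G ! (b + 6) = GOr (b + 3) (b + 5)"
proof -
  have "G ! (b + t) = cmp_block n s ! t" if "t < 7" for t
  proof -
    have "cmp_gates n n ! (s * 7 + t) = cmp_block n s ! t"
      unfolding cmp_gates_def by (rule nth_concat_map_const) (use s that in auto)
    then show ?thesis by (simp add: G_def b_def cmp_circuit_def replicate_numeral nth_append mult.commute)
  qed
  from this[of 0] this[of 1] this[of 2] this[of 3] this[of 4] this[of 5] this[of 6]
  show "G ! b = GIn (n - 1 - s)" "G ! (b + 1) = GIn (n + (n - 1 - s))" "G ! (b + 2) = GNot (b + 1)"
    and "G ! (b + 3) = GAnd b (b + 2)" "G ! (b + 4) = GOr b (b + 2)"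
    and "G ! (b + 5) = GAnd (b + 4) (b - 1)" "G ! (b + 6) = GOr (b + 3) (b + 5)"
    by (simp_all add: cmp_block_def b_def)
  show "b + 6 < length G" using s by (simp add: G_def b_def length_cmp_circuit)
qed

lemma gate_value_cmp_circuit:
  assumes "s \<le> n"
  shows "gate_value (charvec n B1 @ charvec n B2) (fst (cmp_circuit n)) (3 + 7 * s)
           = lex_le B1 B2 (n + 1 - s) s"
  using assms
proof (induction s)
  case 0
  then show ?case
    using length_cmp_circuit[of n] by (simp add: gate_value_GConst cmp_circuit_def replicate_numeral)
next
  case (Suc s)
  define G where "G = fst (cmp_circuit n)"
  define xs where "xs = charvec n B1 @ charvec n B2"
  define b where "b = 4 + 7 * s"
  define a where "a = n - s"
  have sn: "s < n" using Suc.prems by simp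
  note gates = cmp_circuit_block_gates[OF sn, folded G_def b_def]
  obtain j where j: "j = n - 1 - s" "j < n" "Suc j = a" using sn a_def by simp
  have v0: "gate_value xs G b = (a \<in> B1)"
    using gate_value_GIn[OF _ gates(2)] gates(1) j by (simp add: xs_def getv_append getv_charvec)
  have "getv xs (n + j) = (a \<in> B2)"
    using j by (simp add: xs_def getv_append getv_charvec)
  then have v1: "gate_value xs G (b + 1) = (a \<in> B2)"
    using gate_value_GIn[OF _ gates(3)] gates(1) j by simp
  have v2: "gate_value xs G (b + 2) = (a \<notin> B2)"
    using gate_value_GNot[OF _ gates(4)] gates(1) v1 by simp
  have v3: "gate_value xs G (b + 3) = (a \<in> B1 \<and> a \<notin> B2)"
    using gate_value_GAnd[OF _ gates(5)] gates(1) v0 v2 by simp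
  have v4: "gate_value xs G (b + 4) = (a \<in> B1 \<or> a \<notin> B2)"
    using gate_value_GOr[OF _ gates(6)] gates(1) v0 v2 by simp
  have v5: "gate_value xs G (b + 5) = ((a \<in> B1 \<or> a \<notin> B2) \<and> lex_le B1 B2 (n + 1 - s) s)"
    using gate_value_GAnd[OF _ gates(7)] gates(1) v4 Suc.IH sn by (simp add: b_def G_def xs_def)
  have v6: "gate_value xs G (b + 6)
      = ((a \<in> B1 \<and> a \<notin> B2) \<or> ((a \<in> B1 \<or> a \<notin> B2) \<and> lex_le B1 B2 (n + 1 - s) s))"
    using gate_value_GOr[OF _ gates(8)] gates(1) v3 v5 by simp
  have "n + 1 - Suc s = a" "Suc a = n + 1 - s" using sn by (simp_all add: a_def)
  then show ?case using v6 by (auto simp: G_def xs_def b_def)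
qed

lemma eval_cmp_circuit:
  "eval_circuit (cmp_circuit n) (charvec n B1 @ charvec n B2) = [lex_le B1 B2 1 n]"
  using gate_value_cmp_circuit[of n n B1 B2]
  by (simp add: eval_circuit_eq_map_gate_value cmp_circuit_def)

text \<open>Selector circuit, with \<open>K = 2 k + 2\<close> gates per column.  For \<open>l \<le> k\<close>, gate
  \<open>7 + m K + 2 l + 1\<close> of column \<open>m\<close> holds the threshold bit \<open>t m l \<longleftrightarrow> l \<le> count_upto D m\<close>;
  column \<open>m + 1\<close> starts with the input bit \<open>x\<close> of element \<open>m + 1\<close> and obtains
  \<open>t (m + 1) (l + 1) = t m (l + 1) \<or> (t m l \<and> x)\<close> from the pair of gates at offsets \<open>2 l + 2\<close>,
  \<open>2 l + 3\<close>.  Output bit \<open>m\<close> is \<open>x \<and> \<not> t m k \<and> t n k\<close>.\<close>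

definition count_pair :: "nat \<Rightarrow> nat \<Rightarrow> nat \<Rightarrow> gate list" where
  "count_pair K m l = [GAnd (7 + m * K + 2 * l + 1) (7 + m * K + K),
     GOr (7 + m * K + 2 * l + 3) (7 + m * K + K + 2 * l + 2)]"

definition count_column :: "nat \<Rightarrow> nat \<Rightarrow> nat \<Rightarrow> gate list" where
  "count_column K k m = [GIn m, GConst True] @ concat (map (count_pair K m) [0..<k])"

definition count_column0 :: "nat \<Rightarrow> gate list" where
  "count_column0 j = [GConst False, GConst True] @ replicate j (GConst False)"

definition count_gates :: "nat \<Rightarrow> nat \<Rightarrow> nat \<Rightarrow> gate list" where
  "count_gates K k m = count_column0 (k + k) @ concat (map (count_column K k) [0..<m])"

definition select_block :: "nat \<Rightarrow> nat \<Rightarrow> nat \<Rightarrow> gate list" where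
  "select_block K n m = [GNot (7 + m * K + K - 1), GAnd (7 + m * K + K) (7 + n * K + K + 3 * m),
     GAnd (7 + n * K + K + 3 * m + 1) (7 + n * K + K - 1)]"

definition select_gates :: "nat \<Rightarrow> nat \<Rightarrow> nat \<Rightarrow> gate list" where
  "select_gates K n m = concat (map (select_block K n) [0..<m])"

definition select_outputs :: "nat \<Rightarrow> nat \<Rightarrow> nat \<Rightarrow> nat list" where
  "select_outputs K n m = map (\<lambda>j. 7 + n * K + K + 2 + 3 * j) [0..<m]"

definition select_circuit :: "nat \<Rightarrow> nat \<Rightarrow> circuit" where
  "select_circuit n k = (replicate 7 (GIn 0) @ count_gates (2 * k + 2) k n @ select_gates (2 * k + 2) n n,
     select_outputs (2 * k + 2) n n)"

lemma length_count_pair [simp]: "length (count_pair K m l) = 2"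
  by (simp add: count_pair_def)

lemma length_count_column [simp]: "length (count_column K k m) = 2 + 2 * k"
  by (simp add: count_column_def length_concat_map_const[of k _ 2])

lemma length_select_block [simp]: "length (select_block K n m) = 3"
  by (simp add: select_block_def)

lemma length_select_gates: "length (select_gates K n m) = 3 * m"
  by (simp add: select_gates_def length_concat_map_const[of m _ 3])

context
  fixes n k K :: nat and D :: "nat set"
  assumes K_def: "K = 2 * k + 2"
begin

lemma fst_select_circuit: "fst (select_circuit n k) = replicate 7 (GIn 0) @ count_column0 (k + k)
    @ concat (map (count_column K k) [0..<n]) @ select_gates K n n"
  by (simp add: select_circuit_def count_gates_def K_def)

lemma length_select_circuit: "length (fst (select_circuit n k)) = 7 + K + n * K + 3 * n"
  by (simp add: fst_select_circuit count_column0_def length_select_gates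
      length_concat_map_const[of n _ K] K_def)

lemma nth_select_circuit_column0:
  assumes "j < K"
  shows "fst (select_circuit n k) ! (7 + j) = GConst (j = 1)"
proof -
  have "length (count_column0 (k + k)) = K" by (simp add: count_column0_def K_def)
  moreover have "count_column0 (k + k) ! j = GConst (j = 1)"
    using assms by (auto simp: count_column0_def nth_Cons' K_def)
  ultimately show ?thesis using assms by (simp add: fst_select_circuit nth_append)
qed

lemma nth_select_circuit_column:
  assumes "m < n" "j < K"
  shows "fst (select_circuit n k) ! (7 + m * K + K + j) = count_column K k m ! j"
proof -
  have "m * K + j < Suc m * K" using assms by simp
  also have "\<dots> \<le> n * K" using assms by (intro mult_le_mono1) simp
  finally have "m * K + j < n * K" .
  moreover have "concat (map (count_column K k) [0..<n]) ! (m * K + j) = count_column K k m ! j"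
    by (rule nth_concat_map_const) (use assms K_def in auto)
  ultimately show ?thesis
    by (simp add: fst_select_circuit nth_append count_column0_def length_concat_map_const[of n _ K]
        K_def algebra_simps)
qed

lemma nth_select_circuit_select:
  assumes "m < n" "t < 3"
  shows "fst (select_circuit n k) ! (7 + n * K + K + 3 * m + t) = select_block K n m ! t"
proof -
  have "select_gates K n n ! (m * 3 + t) = select_block K n m ! t"
    unfolding select_gates_def by (rule nth_concat_map_const) (use assms in auto)
  then show ?thesis
    by (simp add: fst_select_circuit nth_append count_column0_def length_concat_map_const[of n _ K]
        K_def algebra_simps)
qed

lemma nth_count_column_pair:
  "l < k \<Longrightarrow> t < 2 \<Longrightarrow> count_column K k m ! (2 + (l * 2 + t)) = count_pair K m l ! t"
  unfolding count_column_def by (simp add: nth_concat_map_const)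

lemma select_circuit_column_gates:
  assumes m: "m < n"
  defines "G \<equiv> fst (select_circuit n k)" and "c \<equiv> 7 + m * K + K"
  shows "c + 2 * k + 1 < length G" and "G ! c = GIn m" and "G ! (c + 1) = GConst True"
    and "l < k \<Longrightarrow> G ! (c + 2 * l + 2) = GAnd (7 + m * K + 2 * l + 1) c"
    and "l < k \<Longrightarrow> G ! (c + 2 * l + 3) = GOr (7 + m * K + 2 * l + 3) (c + 2 * l + 2)"
proof -
  have "Suc m * K \<le> n * K" using m by (intro mult_le_mono1) simp
  then show "c + 2 * k + 1 < length G" by (simp add: G_def c_def length_select_circuit K_def)
  show "G ! c = GIn m" "G ! (c + 1) = GConst True"
    using nth_select_circuit_column[OF m, of 0] nth_select_circuit_column[OF m, of 1]
    by (simp_all add: G_def c_def count_column_def K_def)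
  show "G ! (c + 2 * l + 2) = GAnd (7 + m * K + 2 * l + 1) c"
    and "G ! (c + 2 * l + 3) = GOr (7 + m * K + 2 * l + 3) (c + 2 * l + 2)" if "l < k"
    using nth_select_circuit_column[OF m, of "2 + (l * 2 + 0)"] nth_count_column_pair[OF that, of 0 m]
      nth_select_circuit_column[OF m, of "2 + (l * 2 + 1)"] nth_count_column_pair[OF that, of 1 m] that
    by (simp_all add: G_def c_def count_pair_def K_def algebra_simps)
qed

lemma gate_value_column_input:
  assumes "m < n"
  shows "gate_value (charvec n D) (fst (select_circuit n k)) (7 + m * K + K) \<longleftrightarrow> Suc m \<in> D"
  using gate_value_GIn[OF _ select_circuit_column_gates(2)[OF assms]] select_circuit_column_gates(1)[OF assms] assms
  by (simp add: getv_charvec)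

lemma gate_value_threshold:
  assumes "m \<le> n" "l \<le> k"
  shows "gate_value (charvec n D) (fst (select_circuit n k)) (7 + m * K + 2 * l + 1)
           \<longleftrightarrow> l \<le> count_upto D m"
  using assms
proof (induction m arbitrary: l)
  case 0
  then have "7 + 0 * K + 2 * l + 1 < length (fst (select_circuit n k))"
    by (simp add: length_select_circuit K_def)
  moreover have "fst (select_circuit n k) ! (7 + 0 * K + 2 * l + 1) = GConst (l = 0)"
    using nth_select_circuit_column0[of "2 * l + 1"] 0 by (simp add: K_def)
  ultimately show ?case by (simp add: gate_value_GConst)
next
  case (Suc m)
  define G where "G = fst (select_circuit n k)"
  define xs where "xs = charvec n D"
  define c where "c = 7 + m * K + K"
  have mn: "m < n" using Suc.prems by simp
  note gates = select_circuit_column_gates[OF mn, folded G_def c_def]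
  have x: "gate_value xs G c = (Suc m \<in> D)"
    using gate_value_column_input[OF mn] by (simp add: G_def xs_def c_def)
  show ?case
  proof (cases l)
    case 0
    then show ?thesis
      using gate_value_GConst[OF _ gates(3)] gates(1) by (simp add: G_def xs_def c_def algebra_simps)
  next
    case (Suc l')
    have lk: "l' < k" using Suc.prems Suc by simp
    have t1: "gate_value xs G (7 + m * K + 2 * l' + 1) = (l' \<le> count_upto D m)"
      using Suc.IH[of l'] Suc.prems lk by (simp add: G_def xs_def)
    have t2: "gate_value xs G (7 + m * K + 2 * l' + 3) = (Suc l' \<le> count_upto D m)"
      using Suc.IH[of "Suc l'"] Suc.prems lk by (simp add: G_def xs_def)
    have "gate_value xs G (c + 2 * l' + 2) = (l' \<le> count_upto D m \<and> Suc m \<in> D)"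
      using gate_value_GAnd[OF _ gates(4)[OF lk]] gates(1) lk t1 x by (simp add: c_def K_def)
    then have "gate_value xs G (c + 2 * l' + 3)
        = (Suc l' \<le> count_upto D m \<or> (l' \<le> count_upto D m \<and> Suc m \<in> D))"
      using gate_value_GOr[OF _ gates(5)[OF lk]] gates(1) lk t2 by (simp add: c_def K_def)
    moreover have "7 + Suc m * K + 2 * l + 1 = c + 2 * l' + 3" using Suc by (simp add: c_def)
    ultimately show ?thesis using Suc by (auto simp: G_def xs_def count_upto_Suc)
  qed
qed

lemma gate_value_select_output:
  assumes "m < n"
  shows "gate_value (charvec n D) (fst (select_circuit n k)) (7 + n * K + K + 2 + 3 * m)
    \<longleftrightarrow> Suc m \<in> D \<and> \<not> k \<le> count_upto D m \<and> k \<le> count_upto D n"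
proof -
  define G where "G = fst (select_circuit n k)"
  define xs where "xs = charvec n D"
  define b where "b = 7 + n * K + K + 3 * m"
  have L: "b + 2 < length G" using assms by (simp add: G_def b_def length_select_circuit algebra_simps)
  have mK: "Suc m * K \<le> n * K" using assms by (intro mult_le_mono1) simp
  have g0: "G ! b = GNot (7 + m * K + 2 * k + 1)"
    and g1: "G ! (b + 1) = GAnd (7 + m * K + K) b"
    and g2: "G ! (b + 2) = GAnd (b + 1) (7 + n * K + 2 * k + 1)"
    using nth_select_circuit_select[OF assms, of 0] nth_select_circuit_select[OF assms, of 1]
      nth_select_circuit_select[OF assms, of 2]
    by (simp_all add: G_def b_def select_block_def K_def)
  have "gate_value xs G b = (\<not> k \<le> count_upto D m)"
    using gate_value_GNot[OF _ g0] L mK gate_value_threshold[of m k] assms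
    by (simp add: G_def xs_def b_def K_def)
  then have "gate_value xs G (b + 1) = (Suc m \<in> D \<and> \<not> k \<le> count_upto D m)"
    using gate_value_GAnd[OF _ g1] L mK gate_value_column_input[OF assms]
    by (simp add: G_def xs_def b_def K_def)
  then have "gate_value xs G (b + 2) = (Suc m \<in> D \<and> \<not> k \<le> count_upto D m \<and> k \<le> count_upto D n)"
    using gate_value_GAnd[OF _ g2] L gate_value_threshold[of n k] by (simp add: G_def xs_def b_def K_def)
  then show ?thesis by (simp add: G_def xs_def b_def algebra_simps)
qed

lemma eval_select_circuit:
  "eval_circuit (select_circuit n k) (charvec n D)
     = map (\<lambda>m. Suc m \<in> D \<and> \<not> k \<le> count_upto D m \<and> k \<le> count_upto D n) [0..<n]"
proof -
  have "snd (select_circuit n k) = map (\<lambda>m. 7 + n * K + K + 2 + 3 * m) [0..<n]"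
    by (simp add: select_circuit_def select_outputs_def K_def)
  then have "eval_circuit (select_circuit n k) (charvec n D) = map (\<lambda>m. gate_value (charvec n D)
      (fst (select_circuit n k)) (7 + n * K + K + 2 + 3 * m)) [0..<n]"
    by (simp add: eval_circuit_eq_map_gate_value)
  also have "\<dots> = map (\<lambda>m. Suc m \<in> D \<and> \<not> k \<le> count_upto D m \<and> k \<le> count_upto D n) [0..<n]"
    using gate_value_select_output by (intro map_cong) auto
  finally show ?thesis .
qed

end

lemma eval_select_circuit_is_min_sub:
  assumes D: "D \<subseteq> {1..n}"
  shows "if \<exists>B\<in>famF (n, k). B \<subseteq> D
         then \<exists>B. is_min_sub (lex_order (n, k)) (famF (n, k)) D B
                  \<and> eval_circuit (select_circuit n k) (charvec n D) = charvec n B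
         else eval_circuit (select_circuit n k) (charvec n D) = charvec n {}"
proof (cases "k \<le> card D")
  case True
  have "eval_circuit (select_circuit n k) (charvec n D) = charvec n (first_elems D k)"
    unfolding eval_select_circuit[where K = "2 * k + 2", OF refl] count_upto_eq_card[OF D]
    using True by (auto simp: charvec_def first_elems_def not_le)
  then show ?thesis
    using is_min_sub_first_elems[OF D True] ex_famF_subset_iff[OF D] True by auto
next
  case False
  have "eval_circuit (select_circuit n k) (charvec n D) = charvec n {}"
    unfolding eval_select_circuit[where K = "2 * k + 2", OF refl] count_upto_eq_card[OF D]
    using False by (simp add: charvec_def)
  then show ?thesis
    using ex_famF_subset_iff[OF D] False by simp
qed

section \<open>Hoare-style reasoning about RAM programs\<close>

text \<open>The programs below access only registers below \<open>base\<close> directly and write their output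
  sequentially from address \<open>base\<close> on, so a memory is abstracted to its registers and the list of
  values written so far.\<close>

definition mem_repr :: "nat \<Rightarrow> (nat \<Rightarrow> nat) \<Rightarrow> nat list \<Rightarrow> (nat \<Rightarrow> nat) \<Rightarrow> bool" where
  "mem_repr base regs w M \<longleftrightarrow> (\<forall>a<base. M a = regs a) \<and> (\<forall>i<length w. M (base + i) = w ! i)"

fun safe_instr :: "nat \<Rightarrow> instr \<Rightarrow> (nat \<Rightarrow> nat) \<Rightarrow> nat list \<Rightarrow> bool" where
  "safe_instr base (RConst a c) regs w = (a < base)"
| "safe_instr base (RAdd a x y) regs w = (a < base \<and> x < base \<and> y < base)"
| "safe_instr base (RSub a x y) regs w = (a < base \<and> x < base \<and> y < base)"
| "safe_instr base (RLoad a x) regs w = False"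
| "safe_instr base (RStore a x) regs w = (a < base \<and> x < base \<and> regs a = base + length w)"
| "safe_instr base (RJz a l) regs w = (a < base)"

fun abs_exec :: "instr \<Rightarrow> nat \<Rightarrow> (nat \<Rightarrow> nat) \<Rightarrow> nat list \<Rightarrow> nat \<times> (nat \<Rightarrow> nat) \<times> nat list" where
  "abs_exec (RConst a c) pc regs w = (Suc pc, regs(a := c), w)"
| "abs_exec (RAdd a x y) pc regs w = (Suc pc, regs(a := regs x + regs y), w)"
| "abs_exec (RSub a x y) pc regs w = (Suc pc, regs(a := regs x - regs y), w)"
| "abs_exec (RLoad a x) pc regs w = (Suc pc, regs, w)"
| "abs_exec (RStore a x) pc regs w = (Suc pc, regs, w @ [regs x])"
| "abs_exec (RJz a l) pc regs w = (if regs a = 0 then (l, regs, w) else (Suc pc, regs, w))"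

lemma exec_instr_simulation:
  assumes "mem_repr base regs w M" "safe_instr base ins regs w"
    and "abs_exec ins pc regs w = (pc', regs', w')"
  shows "fst (exec_instr ins pc M) = pc' \<and> mem_repr base regs' w' (snd (exec_instr ins pc M))"
  using assms by (cases ins) (auto simp: mem_repr_def nth_append split: if_splits)

definition runs_to :: "instr list \<Rightarrow> nat \<Rightarrow> nat \<Rightarrow> (nat \<Rightarrow> nat) \<Rightarrow> nat list \<Rightarrow> nat \<Rightarrow> nat
    \<Rightarrow> ((nat \<Rightarrow> nat) \<Rightarrow> nat list \<Rightarrow> bool) \<Rightarrow> bool" where
  "runs_to P base pc regs w T pc' Q \<longleftrightarrow> (\<forall>M. mem_repr base regs w M \<longrightarrow>
     (\<exists>t\<le>T. \<exists>regs' w' M'. (ram_step P ^^ t) (pc, M) = (pc', M') \<and> Q regs' w' \<and> mem_repr base regs' w' M'))"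

lemma runs_to_here: "pc = pc' \<Longrightarrow> Q regs w \<Longrightarrow> runs_to P base pc regs w T pc' Q"
  unfolding runs_to_def by (intro allI impI exI[of _ 0]) auto

lemma runs_to_step_any:
  assumes "P ! pc = ins" "pc < length P \<and> safe_instr base ins regs w \<and> 0 < T"
    and "case abs_exec ins pc regs w of (pc'', regs', w') \<Rightarrow> runs_to P base pc'' regs' w' (T - 1) pc' Q"
  shows "runs_to P base pc regs w T pc' Q"
  unfolding runs_to_def
proof (intro allI impI)
  fix M assume M: "mem_repr base regs w M"
  obtain pc'' regs' w' where abs: "abs_exec ins pc regs w = (pc'', regs', w')"
    by (metis prod.exhaust)
  define M' where "M' = snd (exec_instr ins pc M)"
  have "ram_step P (pc, M) = (pc'', M')" "mem_repr base regs' w' M'"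
    using exec_instr_simulation[OF M _ abs] assms(1,2)
    by (auto simp: ram_step_def M'_def prod_eq_iff)
  moreover obtain t regs'' w'' M'' where "t \<le> T - 1" "(ram_step P ^^ t) (pc'', M') = (pc', M'')"
      "Q regs'' w''" "mem_repr base regs'' w'' M''"
    using assms(3) \<open>mem_repr base regs' w' M'\<close> abs unfolding runs_to_def by auto
  moreover from calculation have "(ram_step P ^^ Suc t) (pc, M) = (pc', M'')"
    by (simp only: funpow_Suc_right comp_apply)
  ultimately show "\<exists>t\<le>T. \<exists>regs' w' M'. (ram_step P ^^ t) (pc, M) = (pc', M') \<and> Q regs' w'
      \<and> mem_repr base regs' w' M'"
    using assms(2) by (intro exI[of _ "Suc t"]) auto
qed

text \<open>Symbolic execution applies \<open>runs_to_step\<close> repeatedly, solving the fetch premise first by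
  evaluating the program; the guard \<open>pc \<noteq> pc'\<close> stops it at the target, so a loop body takes its
  first step with \<open>runs_to_step_any\<close>.\<close>

lemma runs_to_step:
  "P ! pc = ins \<Longrightarrow> pc \<noteq> pc' \<and> pc < length P \<and> safe_instr base ins regs w \<and> 0 < T \<Longrightarrow>
    (case abs_exec ins pc regs w of (pc'', regs', w') \<Rightarrow> runs_to P base pc'' regs' w' (T - 1) pc' Q) \<Longrightarrow>
    runs_to P base pc regs w T pc' Q"
  by (rule runs_to_step_any) auto

lemma runs_to_mono: "runs_to P base pc regs w T pc' Q \<Longrightarrow> T \<le> T' \<Longrightarrow> runs_to P base pc regs w T' pc' Q"
  unfolding runs_to_def by (meson order_trans)

lemma runs_to_trans:
  assumes "runs_to P base pc regs w T1 pc1 Q1"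
    and "\<And>regs w. Q1 regs w \<Longrightarrow> runs_to P base pc1 regs w T2 pc2 Q2"
  shows "runs_to P base pc regs w (T1 + T2) pc2 Q2"
  unfolding runs_to_def
proof (intro allI impI)
  fix M assume "mem_repr base regs w M"
  with assms(1) obtain t1 regs1 w1 M1 where first: "t1 \<le> T1" "(ram_step P ^^ t1) (pc, M) = (pc1, M1)"
      "Q1 regs1 w1" "mem_repr base regs1 w1 M1"
    unfolding runs_to_def by blast
  with assms(2)[OF first(3)] obtain t2 regs2 w2 M2 where second: "t2 \<le> T2"
      "(ram_step P ^^ t2) (pc1, M1) = (pc2, M2)" "Q2 regs2 w2" "mem_repr base regs2 w2 M2"
    unfolding runs_to_def by blast
  have "(ram_step P ^^ (t2 + t1)) (pc, M) = (pc2, M2)"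
    using first(2) second(2) by (simp add: funpow_add)
  with first(1) second show "\<exists>t\<le>T1 + T2. \<exists>regs' w' M'. (ram_step P ^^ t) (pc, M) = (pc2, M')
      \<and> Q2 regs' w' \<and> mem_repr base regs' w' M'"
    by (intro exI[of _ "t2 + t1"]) auto
qed

lemma runs_to_loop:
  assumes body: "\<And>m regs w. m < N \<Longrightarrow> I m regs w \<Longrightarrow> runs_to P base pc regs w T pc (I (Suc m))"
    and exit: "\<And>regs w. I N regs w \<Longrightarrow> runs_to P base pc regs w T' pc' Q"
    and "I 0 regs w"
  shows "runs_to P base pc regs w (N * T + T') pc' Q"
proof -
  have "runs_to P base pc regs w ((N - m) * T + T') pc' Q" if "m \<le> N" "I m regs w" for m regs w
    using that
  proof (induction "N - m" arbitrary: m regs w)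
    case 0
    then show ?case using exit by simp
  next
    case (Suc x)
    then have "runs_to P base pc regs w (T + ((N - Suc m) * T + T')) pc' Q"
      by (intro runs_to_trans[OF body]) auto
    moreover have "T + (N - Suc m) * T = (N - m) * T"
      using Suc.hyps(2) by (simp add: Suc_diff_Suc[symmetric])
    ultimately show ?case by (simp add: add.assoc[symmetric])
  qed
  from this[of 0] show ?thesis using assms(3) by simp
qed

lemma ram_output_mem_repr:
  assumes "mem_repr base regs w M" "1 \<le> base" "regs 0 = base + length w - 1"
  shows "ram_output M = map regs [1..<base] @ w"
proof -
  have "[1..<Suc (M 0)] = [1..<base] @ [base..<base + length w]"
    using assms upt_add_eq_append[of 1 base "length w"] by (simp add: mem_repr_def)
  moreover have "map M [base..<base + length w] = w"
    using assms(1) by (intro nth_equalityI) (simp_all add: mem_repr_def)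
  ultimately show ?thesis
    using assms(1) by (simp add: ram_output_def mem_repr_def)
qed

lemma runs_to_computes:
  assumes "runs_to P base 0 (snd (ram_init xs)) [] T (length P) Q"
    and "\<And>regs w M. Q regs w \<Longrightarrow> mem_repr base regs w M \<Longrightarrow> ram_output M = ys"
  shows "ram_computes_within P xs ys T"
proof -
  have "mem_repr base (snd (ram_init xs)) [] (snd (ram_init xs))"
    by (simp add: mem_repr_def)
  with assms(1) obtain t regs w M where "t \<le> T" "(ram_step P ^^ t) (ram_init xs) = (length P, M)"
      "Q regs w" "mem_repr base regs w M"
    unfolding runs_to_def by (auto simp: ram_init_def)
  with assms(2) show ?thesis
    unfolding ram_computes_within_def by (intro exI[of _ t]) auto
qed

lemma ram_computes_within_mono:
  "ram_computes_within P xs ys T \<Longrightarrow> T \<le> T' \<Longrightarrow> ram_computes_within P xs ys T'"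
  unfolding ram_computes_within_def by (meson order_trans)

section \<open>Circuit-generating programs\<close>

definition enc_gates :: "gate list \<Rightarrow> nat list" where
  "enc_gates gs = concat (map enc_gate gs)"

lemma enc_gates_simps [simp]:
  "enc_gates [] = []"
  "enc_gates (g # gs) = enc_gate g @ enc_gates gs"
  "enc_gates (gs @ hs) = enc_gates gs @ enc_gates hs"
  by (simp_all add: enc_gates_def)

text \<open>In all three programs register 2 holds 0 and register 3 holds 1, so \<open>RJz 2 l\<close> is an
  unconditional jump.\<close>

definition cmp_prog :: "instr list" where
  "cmp_prog = [RConst 3 1, RConst 5 8, RAdd 4 0 2, RStore 5 3, RAdd 5 5 3, RStore 5 3, RAdd 5 5 3,
    RConst 6 4, RJz 4 68, RSub 4 4 3, RStore 5 2, RAdd 5 5 3, RStore 5 4, RAdd 5 5 3, RStore 5 2,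
    RAdd 5 5 3, RAdd 7 0 4, RStore 5 7, RAdd 5 5 3, RConst 7 2, RStore 5 7, RAdd 5 5 3, RConst 7 1,
    RAdd 7 6 7, RStore 5 7, RAdd 5 5 3, RConst 7 3, RStore 5 7, RAdd 5 5 3, RStore 5 6, RAdd 5 5 3,
    RConst 7 2, RAdd 7 6 7, RStore 5 7, RAdd 5 5 3, RConst 7 4, RStore 5 7, RAdd 5 5 3, RStore 5 6,
    RAdd 5 5 3, RConst 7 2, RAdd 7 6 7, RStore 5 7, RAdd 5 5 3, RConst 7 3, RStore 5 7, RAdd 5 5 3,
    RConst 7 4, RAdd 7 6 7, RStore 5 7, RAdd 5 5 3, RSub 7 6 3, RStore 5 7, RAdd 5 5 3, RConst 7 4,
    RStore 5 7, RAdd 5 5 3, RConst 7 3, RAdd 7 6 7, RStore 5 7, RAdd 5 5 3, RConst 7 5, RAdd 7 6 7,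
    RStore 5 7, RAdd 5 5 3, RConst 7 7, RAdd 6 6 7, RJz 2 8, RStore 5 3, RAdd 5 5 3, RSub 7 6 3,
    RStore 5 7, RAdd 5 5 3, RAdd 1 6 2, RSub 0 5 3, RConst 2 0, RConst 3 0, RConst 4 0, RConst 5 0,
    RConst 6 0, RConst 7 0]"

lemma length_cmp_prog [simp]: "length cmp_prog = 81"
  by (simp add: cmp_prog_def)

definition cmp_inv :: "nat \<Rightarrow> nat \<Rightarrow> (nat \<Rightarrow> nat) \<Rightarrow> nat list \<Rightarrow> bool" where
  "cmp_inv n m regs w \<longleftrightarrow> regs 0 = n \<and> regs 2 = 0 \<and> regs 3 = 1 \<and> regs 4 = n - m
     \<and> regs 5 = 8 + length w \<and> regs 6 = 4 + 7 * m \<and> w = [1, 1] @ enc_gates (cmp_gates n m)"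

lemma cmp_gates_Suc: "cmp_gates n (Suc m) = cmp_gates n m @ cmp_block n m"
  by (simp add: cmp_gates_def)

lemma cmp_prog_start: "runs_to cmp_prog 8 0 (snd (ram_init [n, k])) [] 8 8 (cmp_inv n 0)"
  unfolding ram_init_def
  apply (rule runs_to_step, simp add: cmp_prog_def, (simp; fail), simp)+
  apply (rule runs_to_here; simp add: cmp_inv_def cmp_gates_def)
  done

lemma cmp_prog_body:
  assumes "m < n" "cmp_inv n m regs w"
  shows "runs_to cmp_prog 8 8 regs w 60 8 (cmp_inv n (Suc m))"
  using assms unfolding cmp_inv_def
  apply (elim conjE)
  apply (rule runs_to_step_any, simp add: cmp_prog_def, (simp; fail), simp)
  apply (rule runs_to_step, simp add: cmp_prog_def, (simp; fail), simp)+
  apply (rule runs_to_here; simp add: cmp_inv_def cmp_gates_Suc cmp_block_def)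
  done

lemma enc_cmp_circuit:
  "enc_circuit (cmp_circuit n) = (4 + 7 * n) # [0, 0, 0, 0, 0, 0, 1, 1] @ enc_gates (cmp_gates n n) @ [1, 3 + 7 * n]"
  by (simp add: enc_circuit_def cmp_circuit_def enc_gates_def[symmetric] replicate_numeral length_cmp_circuit)

lemma cmp_prog_exit:
  assumes "cmp_inv n n regs w"
  shows "runs_to cmp_prog 8 8 regs w 14 81
    (\<lambda>regs w. regs 0 = 8 + length w - 1 \<and> map regs [1..<8] @ w = enc_circuit (cmp_circuit n))"
  using assms unfolding cmp_inv_def
  apply (elim conjE)
  apply (rule runs_to_step_any, simp add: cmp_prog_def, (simp; fail), simp)
  apply (rule runs_to_step, simp add: cmp_prog_def, (simp; fail), simp)+
  apply (rule runs_to_here; simp add: enc_cmp_circuit upt_rec)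
  done

lemma cmp_prog_computes:
  "ram_computes_within cmp_prog [n, k] (enc_circuit (cmp_circuit n)) (74 * (n + 1))"
proof (rule runs_to_computes)
  have "runs_to cmp_prog 8 0 (snd (ram_init [n, k])) [] (8 + (n * 60 + 14)) 81
     (\<lambda>regs w. regs 0 = 8 + length w - 1 \<and> map regs [1..<8] @ w = enc_circuit (cmp_circuit n))"
    using cmp_prog_start by (rule runs_to_trans) (rule runs_to_loop[where I = "cmp_inv n", OF cmp_prog_body cmp_prog_exit])
  then show "runs_to cmp_prog 8 0 (snd (ram_init [n, k])) [] (74 * (n + 1)) (length cmp_prog)
     (\<lambda>regs w. regs 0 = 8 + length w - 1 \<and> map regs [1..<8] @ w = enc_circuit (cmp_circuit n))"
    unfolding length_cmp_prog by (rule runs_to_mono) simp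
qed (simp add: ram_output_mem_repr)

definition select_prog :: "instr list" where
  "select_prog = [RConst 3 1, RConst 4 16, RAdd 7 1 1, RConst 5 2, RAdd 7 7 5, RStore 4 3, RAdd 4 4 3,
    RStore 4 2, RAdd 4 4 3, RStore 4 3, RAdd 4 4 3, RStore 4 3, RAdd 4 4 3, RAdd 12 1 1, RJz 12 21,
    RStore 4 3, RAdd 4 4 3, RStore 4 2, RAdd 4 4 3, RSub 12 12 3, RJz 2 14, RConst 5 7, RAdd 6 5 7,
    RConst 8 0, RAdd 9 0 2, RJz 9 65, RAdd 10 6 2, RStore 4 2, RAdd 4 4 3, RStore 4 8, RAdd 4 4 3,
    RStore 4 3, RAdd 4 4 3, RStore 4 3, RAdd 4 4 3, RConst 5 2, RAdd 6 6 5, RSub 5 10 7, RAdd 11 5 3,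
    RAdd 12 1 2, RJz 12 62, RConst 5 3, RStore 4 5, RAdd 4 4 3, RStore 4 11, RAdd 4 4 3, RStore 4 10,
    RAdd 4 4 3, RConst 5 4, RStore 4 5, RAdd 4 4 3, RConst 5 2, RAdd 5 11 5, RStore 4 5, RAdd 4 4 3,
    RStore 4 6, RAdd 4 4 3, RConst 5 2, RAdd 6 6 5, RAdd 11 11 5, RSub 12 12 3, RJz 2 40, RAdd 8 8 3,
    RSub 9 9 3, RJz 2 25, RSub 13 6 3, RAdd 14 6 2, RConst 5 7, RAdd 10 5 7, RAdd 9 0 2, RJz 9 97,
    RConst 5 2, RStore 4 5, RAdd 4 4 3, RSub 5 10 3, RStore 4 5, RAdd 4 4 3, RConst 5 3, RStore 4 5,
    RAdd 4 4 3, RStore 4 10, RAdd 4 4 3, RStore 4 6, RAdd 4 4 3, RConst 5 3, RStore 4 5, RAdd 4 4 3,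
    RAdd 5 6 3, RStore 4 5, RAdd 4 4 3, RStore 4 13, RAdd 4 4 3, RConst 5 3, RAdd 6 6 5, RAdd 10 10 7,
    RSub 9 9 3, RJz 2 70, RStore 4 0, RAdd 4 4 3, RAdd 9 0 2, RConst 5 2, RAdd 14 14 5, RJz 9 109,
    RStore 4 14, RAdd 4 4 3, RConst 5 3, RAdd 14 14 5, RSub 9 9 3, RJz 2 102, RAdd 1 6 2, RSub 0 4 3,
    RConst 2 0, RConst 3 0, RConst 4 0, RConst 5 0, RConst 6 0, RConst 7 0, RConst 8 0, RConst 9 0,
    RConst 10 0, RConst 11 0, RConst 12 0, RConst 13 0, RConst 14 0, RConst 15 0]"

lemma length_select_prog [simp]: "length select_prog = 125"
  by (simp add: select_prog_def)

definition select_regs :: "nat \<Rightarrow> nat \<Rightarrow> nat \<Rightarrow> (nat \<Rightarrow> nat) \<Rightarrow> nat list \<Rightarrow> bool" where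
  "select_regs n k K regs w \<longleftrightarrow>
     regs 0 = n \<and> regs 1 = k \<and> regs 2 = 0 \<and> regs 3 = 1 \<and> regs 4 = 16 + length w \<and> regs 7 = K"

definition select_inv_init :: "nat \<Rightarrow> nat \<Rightarrow> nat \<Rightarrow> nat \<Rightarrow> (nat \<Rightarrow> nat) \<Rightarrow> nat list \<Rightarrow> bool" where
  "select_inv_init n k K j regs w \<longleftrightarrow> select_regs n k K regs w \<and> regs 12 = k + k - j
     \<and> w = enc_gates (count_column0 j)"

definition select_inv_column :: "nat \<Rightarrow> nat \<Rightarrow> nat \<Rightarrow> nat \<Rightarrow> (nat \<Rightarrow> nat) \<Rightarrow> nat list \<Rightarrow> bool" where
  "select_inv_column n k K m regs w \<longleftrightarrow> select_regs n k K regs w \<and> regs 6 = 7 + m * K + K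
     \<and> regs 8 = m \<and> regs 9 = n - m \<and> w = enc_gates (count_gates K k m)"

definition select_inv_pair :: "nat \<Rightarrow> nat \<Rightarrow> nat \<Rightarrow> nat \<Rightarrow> nat \<Rightarrow> (nat \<Rightarrow> nat) \<Rightarrow> nat list \<Rightarrow> bool" where
  "select_inv_pair n k K m l regs w \<longleftrightarrow> select_regs n k K regs w \<and> regs 8 = m \<and> regs 9 = n - m
     \<and> regs 10 = 7 + m * K + K \<and> regs 6 = 7 + m * K + K + 2 + 2 * l \<and> regs 11 = 7 + m * K + 1 + 2 * l
     \<and> regs 12 = k - l
     \<and> w = enc_gates (count_gates K k m) @ enc_gates ([GIn m, GConst True] @ concat (map (count_pair K m) [0..<l]))"

definition select_inv_block :: "nat \<Rightarrow> nat \<Rightarrow> nat \<Rightarrow> nat \<Rightarrow> (nat \<Rightarrow> nat) \<Rightarrow> nat list \<Rightarrow> bool" where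
  "select_inv_block n k K m regs w \<longleftrightarrow> select_regs n k K regs w \<and> regs 6 = 7 + n * K + K + 3 * m
     \<and> regs 10 = 7 + m * K + K \<and> regs 13 = 7 + n * K + K - 1 \<and> regs 14 = 7 + n * K + K
     \<and> regs 9 = n - m \<and> w = enc_gates (count_gates K k n) @ enc_gates (select_gates K n m)"

definition select_inv_output :: "nat \<Rightarrow> nat \<Rightarrow> nat \<Rightarrow> nat \<Rightarrow> (nat \<Rightarrow> nat) \<Rightarrow> nat list \<Rightarrow> bool" where
  "select_inv_output n k K m regs w \<longleftrightarrow> select_regs n k K regs w \<and> regs 6 = 7 + n * K + K + 3 * n
     \<and> regs 14 = 7 + n * K + K + 2 + 3 * m \<and> regs 9 = n - m
     \<and> w = enc_gates (count_gates K k n) @ enc_gates (select_gates K n n) @ [n] @ select_outputs K n m"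

lemma count_column0_Suc: "count_column0 (Suc j) = count_column0 j @ [GConst False]"
  by (simp add: count_column0_def replicate_append_same[symmetric])

lemma count_gates_Suc: "count_gates K k (Suc m) = count_gates K k m @ count_column K k m"
  by (simp add: count_gates_def)

lemma select_gates_Suc: "select_gates K n (Suc m) = select_gates K n m @ select_block K n m"
  by (simp add: select_gates_def)

lemma select_outputs_Suc:
  "select_outputs K n (Suc m) = select_outputs K n m @ [7 + n * K + K + 2 + 3 * m]"
  by (simp add: select_outputs_def)

lemma select_prog_start:
  assumes "K = 2 * k + 2"
  shows "runs_to select_prog 16 0 (snd (ram_init [n, k])) [] 14 14 (select_inv_init n k K 0)"
  unfolding ram_init_def
  apply (rule runs_to_step, simp add: select_prog_def, (simp; fail), simp)+
  apply (rule runs_to_here; simp add: select_inv_init_def select_regs_def count_column0_def assms)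
  done

lemma select_prog_init_body:
  assumes "j < k + k" "select_inv_init n k K j regs w"
  shows "runs_to select_prog 16 14 regs w 7 14 (select_inv_init n k K (Suc j))"
  using assms unfolding select_inv_init_def select_regs_def
  apply (elim conjE)
  apply (rule runs_to_step_any, simp add: select_prog_def, (simp; fail), simp)
  apply (rule runs_to_step, simp add: select_prog_def, (simp; fail), simp)+
  apply (rule runs_to_here; simp add: select_inv_init_def select_regs_def count_column0_Suc)
  done

lemma select_prog_init_exit:
  assumes "select_inv_init n k K (k + k) regs w"
  shows "runs_to select_prog 16 14 regs w 5 25 (select_inv_column n k K 0)"
  using assms unfolding select_inv_init_def select_regs_def
  apply (elim conjE)
  apply (rule runs_to_step_any, simp add: select_prog_def, (simp; fail), simp)
  apply (rule runs_to_step, simp add: select_prog_def, (simp; fail), simp)+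
  apply (rule runs_to_here; simp add: select_inv_column_def select_regs_def count_gates_def)
  done

lemma select_prog_column_start:
  assumes "m < n" "select_inv_column n k K m regs w"
  shows "runs_to select_prog 16 25 regs w 15 40 (select_inv_pair n k K m 0)"
  using assms unfolding select_inv_column_def select_regs_def
  apply (elim conjE)
  apply (rule runs_to_step_any, simp add: select_prog_def, (simp; fail), simp)
  apply (rule runs_to_step, simp add: select_prog_def, (simp; fail), simp)+
  apply (rule runs_to_here; simp add: select_inv_pair_def select_regs_def)
  done

lemma select_prog_pair_body:
  assumes "l < k" "select_inv_pair n k K m l regs w"
  shows "runs_to select_prog 16 40 regs w 22 40 (select_inv_pair n k K m (Suc l))"
  using assms unfolding select_inv_pair_def select_regs_def
  apply (elim conjE)
  apply (rule runs_to_step_any, simp add: select_prog_def, (simp; fail), simp)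
  apply (rule runs_to_step, simp add: select_prog_def, (simp; fail), simp)+
  apply (rule runs_to_here; simp add: select_inv_pair_def select_regs_def count_pair_def)
  done

lemma select_prog_pair_exit:
  assumes "K = 2 * k + 2" "select_inv_pair n k K m k regs w"
  shows "runs_to select_prog 16 40 regs w 4 25 (select_inv_column n k K (Suc m))"
  using assms(2) unfolding select_inv_pair_def select_regs_def
  apply (elim conjE)
  apply (rule runs_to_step_any, simp add: select_prog_def, (simp; fail), simp)
  apply (rule runs_to_step, simp add: select_prog_def, (simp; fail), simp)+
  apply (rule runs_to_here; simp add: select_inv_column_def select_regs_def count_gates_Suc count_column_def assms(1))
  done

lemma select_prog_column_body:
  assumes "K = 2 * k + 2" "m < n" "select_inv_column n k K m regs w"
  shows "runs_to select_prog 16 25 regs w (15 + (k * 22 + 4)) 25 (select_inv_column n k K (Suc m))"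
  using select_prog_column_start[OF assms(2,3)]
  by (rule runs_to_trans)
    (rule runs_to_loop[where I = "select_inv_pair n k K m", OF select_prog_pair_body
      select_prog_pair_exit[OF assms(1)]])

lemma select_prog_column_exit:
  assumes "select_inv_column n k K n regs w"
  shows "runs_to select_prog 16 25 regs w 6 70 (select_inv_block n k K 0)"
  using assms unfolding select_inv_column_def select_regs_def
  apply (elim conjE)
  apply (rule runs_to_step_any, simp add: select_prog_def, (simp; fail), simp)
  apply (rule runs_to_step, simp add: select_prog_def, (simp; fail), simp)+
  apply (rule runs_to_here; simp add: select_inv_block_def select_regs_def select_gates_def)
  done

lemma select_prog_block_body:
  assumes "m < n" "select_inv_block n k K m regs w"
  shows "runs_to select_prog 16 70 regs w 27 70 (select_inv_block n k K (Suc m))"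
  using assms unfolding select_inv_block_def select_regs_def
  apply (elim conjE)
  apply (rule runs_to_step_any, simp add: select_prog_def, (simp; fail), simp)
  apply (rule runs_to_step, simp add: select_prog_def, (simp; fail), simp)+
  apply (rule runs_to_here; simp add: select_inv_block_def select_regs_def select_gates_Suc select_block_def)
  done

lemma select_prog_block_exit:
  assumes "select_inv_block n k K n regs w"
  shows "runs_to select_prog 16 70 regs w 6 102 (select_inv_output n k K 0)"
  using assms unfolding select_inv_block_def select_regs_def
  apply (elim conjE)
  apply (rule runs_to_step_any, simp add: select_prog_def, (simp; fail), simp)
  apply (rule runs_to_step, simp add: select_prog_def, (simp; fail), simp)+
  apply (rule runs_to_here; simp add: select_inv_output_def select_regs_def select_outputs_def)
  done

lemma select_prog_output_body:
  assumes "m < n" "select_inv_output n k K m regs w"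
  shows "runs_to select_prog 16 102 regs w 7 102 (select_inv_output n k K (Suc m))"
  using assms unfolding select_inv_output_def select_regs_def
  apply (elim conjE)
  apply (rule runs_to_step_any, simp add: select_prog_def, (simp; fail), simp)
  apply (rule runs_to_step, simp add: select_prog_def, (simp; fail), simp)+
  apply (rule runs_to_here; simp add: select_inv_output_def select_regs_def select_outputs_Suc)
  done

lemma enc_select_circuit:
  assumes "K = 2 * k + 2"
  shows "enc_circuit (select_circuit n k) = (7 + n * K + K + 3 * n) # replicate 14 0
    @ enc_gates (count_gates K k n) @ enc_gates (select_gates K n n) @ [n] @ select_outputs K n n"
proof -
  have "length (count_gates K k n) = K + n * K"
    using assms by (simp add: count_gates_def count_column0_def length_concat_map_const[of n _ K])
  then show ?thesis
    using assms by (simp add: enc_circuit_def select_circuit_def enc_gates_def[symmetric]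
        replicate_numeral length_select_gates select_outputs_def)
qed

lemma select_prog_output_exit:
  assumes "K = 2 * k + 2" "select_inv_output n k K n regs w"
  shows "runs_to select_prog 16 102 regs w 17 125
    (\<lambda>regs w. regs 0 = 16 + length w - 1 \<and> map regs [1..<16] @ w = enc_circuit (select_circuit n k))"
  using assms(2) unfolding select_inv_output_def select_regs_def
  apply (elim conjE)
  apply (rule runs_to_step_any, simp add: select_prog_def, (simp; fail), simp)
  apply (rule runs_to_step, simp add: select_prog_def, (simp; fail), simp)+
  apply (rule runs_to_here; simp add: enc_select_circuit[OF assms(1)] replicate_numeral upt_rec)
  done

lemma select_prog_computes:
  assumes "k \<le> n"
  shows "ram_computes_within select_prog [n, k] (enc_circuit (select_circuit n k)) (100 * (n + 1) ^ 2)"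
proof (rule runs_to_computes)
  define K where "K = 2 * k + 2"
  let ?Q = "\<lambda>regs w. regs 0 = 16 + length w - 1 \<and> map regs [1..<16] @ w = enc_circuit (select_circuit n k)"
  have outputs: "runs_to select_prog 16 102 regs w (n * 7 + 17) 125 ?Q"
    if "select_inv_output n k K 0 regs w" for regs w
    by (rule runs_to_loop[where I = "select_inv_output n k K", OF select_prog_output_body
          select_prog_output_exit[OF K_def] that])
  have blocks: "runs_to select_prog 16 70 regs w (n * 27 + 6 + (n * 7 + 17)) 125 ?Q"
    if "select_inv_block n k K 0 regs w" for regs w
    using runs_to_loop[where I = "select_inv_block n k K", OF select_prog_block_body select_prog_block_exit that] outputs
    by (rule runs_to_trans)
  have columns: "runs_to select_prog 16 25 regs w
      (n * (15 + (k * 22 + 4)) + 6 + (n * 27 + 6 + (n * 7 + 17))) 125 ?Q"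
    if "select_inv_column n k K 0 regs w" for regs w
    using runs_to_loop[where I = "select_inv_column n k K", OF select_prog_column_body[OF K_def] select_prog_column_exit that] blocks
    by (rule runs_to_trans)
  have init: "runs_to select_prog 16 14 regs w
      ((k + k) * 7 + 5 + (n * (15 + (k * 22 + 4)) + 6 + (n * 27 + 6 + (n * 7 + 17)))) 125 ?Q"
    if "select_inv_init n k K 0 regs w" for regs w
    using runs_to_loop[where I = "select_inv_init n k K", OF select_prog_init_body select_prog_init_exit that] columns
    by (rule runs_to_trans)
  have "14 + ((k + k) * 7 + 5 + (n * (15 + (k * 22 + 4)) + 6 + (n * 27 + 6 + (n * 7 + 17))))
      = 48 + 14 * k + 53 * n + 22 * (k * n)"
    by (simp add: algebra_simps)
  also have "\<dots> \<le> 48 + 14 * n + 53 * n + 22 * (n * n)"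
    using assms by (intro add_mono mult_le_mono) simp_all
  also have "\<dots> \<le> 100 * (n + 1) ^ 2"
    by (simp add: power2_eq_square algebra_simps)
  finally show "runs_to select_prog 16 0 (snd (ram_init [n, k])) [] (100 * (n + 1) ^ 2)
      (length select_prog) ?Q"
    unfolding length_select_prog using runs_to_trans[OF select_prog_start[OF K_def] init]
    by (rule runs_to_mono[rotated])
qed (simp add: ram_output_mem_repr)

definition cd_prog :: "nat \<Rightarrow> instr list" where
  "cd_prog p = [RConst 2 1, RSub 1 1 2, RConst 3 p, RJz 1 7, RSub 0 0 3, RSub 1 1 2, RJz 4 3,
    RAdd 1 0 4, RConst 0 1]"

lemma length_cd_prog [simp]: "length (cd_prog p) = 9"
  by (simp add: cd_prog_def)

definition cd_inv :: "nat \<Rightarrow> nat \<Rightarrow> nat \<Rightarrow> nat \<Rightarrow> (nat \<Rightarrow> nat) \<Rightarrow> nat list \<Rightarrow> bool" where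
  "cd_inv n k p m regs w \<longleftrightarrow> regs 0 = n - p * m \<and> regs 1 = k - 1 - m \<and> regs 2 = 1 \<and> regs 3 = p
     \<and> regs 4 = 0 \<and> w = []"

lemma cd_prog_computes:
  "ram_computes_within (cd_prog p) [n, k] [n - p * (k - 1)] ((k - 1) * 4 + 3 + 3)"
proof (rule runs_to_computes)
  have start: "runs_to (cd_prog p) 5 0 (snd (ram_init [n, k])) [] 3 3 (cd_inv n k p 0)"
    unfolding ram_init_def
    apply (rule runs_to_step, simp add: cd_prog_def, (simp; fail), simp)+
    apply (rule runs_to_here; simp add: cd_inv_def)
    done
  have body: "runs_to (cd_prog p) 5 3 regs w 4 3 (cd_inv n k p (Suc m))"
    if "m < k - 1" "cd_inv n k p m regs w" for m regs w
  proof -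
    have "\<not> k \<le> Suc m" using that(1) by simp
    with that(2) show ?thesis
      unfolding cd_inv_def
      apply (elim conjE)
      apply (rule runs_to_step_any, simp add: cd_prog_def, (simp; fail), simp)
      apply (rule runs_to_step, simp add: cd_prog_def, (simp; fail), simp)+
      apply (rule runs_to_here; simp add: cd_inv_def algebra_simps)
      done
  qed
  have exit: "runs_to (cd_prog p) 5 3 regs w 3 9 (\<lambda>regs w. regs 0 = 1 \<and> regs 1 = n - p * (k - 1))"
    if "cd_inv n k p (k - 1) regs w" for regs w
    using that unfolding cd_inv_def
    apply (elim conjE)
    apply (rule runs_to_step, simp add: cd_prog_def, (simp; fail), simp)+
    apply (rule runs_to_here; simp)
    done
  show "runs_to (cd_prog p) 5 0 (snd (ram_init [n, k])) [] ((k - 1) * 4 + 3 + 3) (length (cd_prog p))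
      (\<lambda>regs w. regs 0 = 1 \<and> regs 1 = n - p * (k - 1))"
    using runs_to_trans[OF start runs_to_loop[where I = "cd_inv n k p" and N = "k - 1", OF body exit]] by (simp add: algebra_simps)
qed (simp add: ram_output_def mem_repr_def)

lemma idxA_bounds:
  assumes "2 \<le> r" "(n, k) \<in> idxA r"
  shows "1 \<le> k \<and> k \<le> n"
proof -
  have "k \<le> r * k" using assms(1) mult_le_mono1[of 1 r k] by simp
  moreover have "1 \<le> k" "r * k \<le> n" using assms(2) by (auto simp: idxA_def)
  ultimately show ?thesis by linarith
qed

lemma cmp_prog_correct:
  "ram_computes_within cmp_prog (encF \<alpha>) (enc_circuit (cmp_circuit (fst \<alpha>))) (74 * (fst \<alpha> + 1) ^ 1)
   \<and> (\<forall>B1\<in>famF \<alpha>. \<forall>B2\<in>famF \<alpha>. eval_circuit (cmp_circuit (fst \<alpha>))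
        (charvec (fst \<alpha>) B1 @ charvec (fst \<alpha>) B2) = [(B1, B2) \<in> lex_order \<alpha>])"
  using cmp_prog_computes[of "fst \<alpha>" "snd \<alpha>"] eval_cmp_circuit by (simp add: encF_def lex_order_def)

lemma select_prog_correct:
  assumes "\<alpha> \<in> idxA r" "2 \<le> r"
  shows "ram_computes_within select_prog (encF \<alpha>) (enc_circuit (select_circuit (fst \<alpha>) (snd \<alpha>)))
      (100 * (fst \<alpha> + 1) ^ 2)
    \<and> (\<forall>D. D \<subseteq> {1..fst \<alpha>} \<longrightarrow> (if \<exists>B\<in>famF \<alpha>. B \<subseteq> D
         then \<exists>B. is_min_sub (lex_order \<alpha>) (famF \<alpha>) D B
           \<and> eval_circuit (select_circuit (fst \<alpha>) (snd \<alpha>)) (charvec (fst \<alpha>) D) = charvec (fst \<alpha>) B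
         else eval_circuit (select_circuit (fst \<alpha>) (snd \<alpha>)) (charvec (fst \<alpha>) D) = charvec (fst \<alpha>) {}))"
proof -
  obtain n k where "\<alpha> = (n, k)" "k \<le> n"
    using assms by (cases \<alpha>) (auto dest: idxA_bounds)
  with select_prog_computes[of k n] eval_select_circuit_is_min_sub[of _ n k] show ?thesis
    by (simp add: encF_def)
qed

lemma cd_prog_correct:
  assumes "\<alpha> \<in> idxA r" "2 \<le> r"
  shows "ram_computes_within (cd_prog p) (encF \<alpha>) [cd p (fst \<alpha>) (famF \<alpha>)] (6 * (fst \<alpha> + 1) ^ 1)"
proof -
  obtain n k where "\<alpha> = (n, k)" "1 \<le> k" "k \<le> n"
    using assms by (cases \<alpha>) (auto dest: idxA_bounds)
  with cd_prog_computes[of p n k] show ?thesis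
    by (auto simp: encF_def cd_famF intro: ram_computes_within_mono)
qed

theorem lemma5p4:
  fixes r :: nat
  assumes "r \<ge> 2"
  shows "strongly_poly_computable (idxA r) fst encF famF"
  unfolding strongly_poly_computable_def
  using linear_order_lex_order cmp_prog_correct select_prog_correct[OF _ assms]
    cd_prog_correct[OF _ assms]
  by blast

end
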